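(* Let $A,B\in\mathbb{R}^{p\times p}$, $a,b\in\mathbb{R}^p$, $\alpha,\beta\in\mathbb{R}$, and let $$f(x)=\frac{g(x)}{q(x)}=\frac{\frac12\langle Ax,x\rangle+\langle a,x\rangle+\alpha}{\frac12\langle Bx,x\rangle+\langle b,x\rangle+\beta}.$$ Let $0<m<M$ and $K=\{x\in\mathbb{R}^p: m\le q(x)\le M\}$. Assume $A$ is positive definite and at least one of the following holds: (a) $B=0$; (b) $g$ is non-negative on $K$ and $B$ is negative semi-definite; (c) $g$ is non-positive on $K$ and $B$ is positive semi-definite. Let $x^*$ be a minimizer of $f$ on $K$. Then $f$ is $\kappa$-quasar-convex on $K$ with respect to $x^*$ with $\kappa=\frac mM$, and $f$ is $(\frac\kappa2,\gamma)$-strongly quasar-convex on $K$ with respect to $x^*$, where $\gamma=\frac{\sigma_{\min}(A)}{m}$. Moreover, for every $\lambda\in(0,1)$, $f$ is $\big(\lambda\kappa,(\lambda^{-1}-1)\frac{\sigma_{\min}(A)}{4M}\big)$-strongly quasar-convex on $K$ with respect to $x^*$.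
   Context: $\sigma_{\min}(A)$ is the minimum eigenvalue of $A$. For $\kappa\in(0,1]$ and $\mu\ge0$, $f$ is $(\kappa,\mu)$-strongly quasar-convex on $K$ with respect to $x^*$ if $f(x^* )\ge f(x)+\frac1\kappa\langle\nabla f(x),x^*-x\rangle+\frac\mu2\|x^*-x\|^2$ for all $x\in K$; $\kappa$-quasar-convex means the case $\mu=0$. *)

theory Defs
  imports "HOL-Analysis.Analysis"
begin

definition pos_def_mat :: "real^'n^'n \<Rightarrow> bool" where
  "pos_def_mat A \<longleftrightarrow> transpose A = A \<and> (\<forall>x. x \<noteq> 0 \<longrightarrow> (A *v x) \<bullet> x > 0)"

definition pos_semidef_mat :: "real^'n^'n \<Rightarrow> bool" where
  "pos_semidef_mat A \<longleftrightarrow> transpose A = A \<and> (\<forall>x. (A *v x) \<bullet> x \<ge> 0)"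

definition neg_semidef_mat :: "real^'n^'n \<Rightarrow> bool" where
  "neg_semidef_mat A \<longleftrightarrow> transpose A = A \<and> (\<forall>x. (A *v x) \<bullet> x \<le> 0)"

definition min_eigenvalue :: "real^'n^'n \<Rightarrow> real" where
  "min_eigenvalue A = Inf {l. \<exists>v. v \<noteq> 0 \<and> A *v v = l *\<^sub>R v}"

definition strongly_quasar_convex ::
  "(real^'n \<Rightarrow> real) \<Rightarrow> (real^'n) set \<Rightarrow> real^'n \<Rightarrow> real \<Rightarrow> real \<Rightarrow> bool" where
  "strongly_quasar_convex f K xs \<kappa> \<mu> \<longleftrightarrow>
     0 < \<kappa> \<and> \<kappa> \<le> 1 \<and> 0 \<le> \<mu> \<and>
     (\<forall>x\<in>K. f differentiable (at x) \<and>
        f xs \<ge> f x + (1/\<kappa>) * frechet_derivative f (at x) (xs - x)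
               + (\<mu>/2) * (norm (xs - x))\<^sup>2)"

definition quasar_convex ::
  "(real^'n \<Rightarrow> real) \<Rightarrow> (real^'n) set \<Rightarrow> real^'n \<Rightarrow> real \<Rightarrow> bool" where
  "quasar_convex f K xs \<kappa> \<longleftrightarrow> strongly_quasar_convex f K xs \<kappa> 0"

end

theory Submission
  imports Defs
begin

text \<open>
  Write \<open>d = x\<^sup>* - x\<close>. Since \<open>g\<close> and \<open>q\<close> are quadratic, their second-order Taylor
  expansions are exact, and the quotient rule turns them into the identity
  \<open>q(x) \<nabla>f(x)\<cdot>d = q(x\<^sup>*)(f(x\<^sup>*) - f(x)) - \<langle>Ad,d\<rangle>/2 + f(x)\<langle>Bd,d\<rangle>/2\<close>.
  Each of the alternatives (a)--(c) makes the last term non-positive, and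
  \<open>\<langle>Ad,d\<rangle> \<ge> \<sigma>\<^sub>m\<^sub>i\<^sub>n(A)\<parallel>d\<parallel>\<^sup>2\<close>. Dividing by \<open>\<kappa> q(x)\<close> and using \<open>q(x\<^sup>*)/(\<kappa> q(x)) \<ge> m/(\<kappa> M) \<ge> 1\<close>
  together with \<open>f(x\<^sup>*) \<le> f(x)\<close> yields \<open>(\<kappa>,\<mu>)\<close>-strong quasar-convexity whenever
  \<open>\<kappa> > 0\<close>, \<open>\<kappa> M \<le> m\<close> and \<open>\<kappa> M \<mu> \<le> \<sigma>\<^sub>m\<^sub>i\<^sub>n(A)\<close>; the three claims are instances of this.
\<close>

lemma symmetric_matrix_inner_commute:
  fixes A :: "real^'n^'n"
  assumes "transpose A = A"
  shows "(A *v x) \<bullet> y = x \<bullet> (A *v y)"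
  by (metis assms vector_transpose_matrix dot_lmul_matrix)

lemma linear_coeff_zero_if_quadratic_nonneg:
  fixes c e :: real
  assumes "\<And>t. 0 \<le> 2*t*c + t\<^sup>2*e"
  shows "c = 0"
proof -
  define z where "z = \<bar>e\<bar> + 1"
  have z: "0 < z" "e \<le> z" by (auto simp: z_def)
  have "0 \<le> z\<^sup>2 * (2*(- c / z)*c + (- c / z)\<^sup>2*e)"
    using assms[of "- c / z"] by simp
  also have "\<dots> = -2*c\<^sup>2*z + c\<^sup>2*e"
    using z by (simp add: field_simps power2_eq_square)
  also have "\<dots> \<le> -2*c\<^sup>2*z + c\<^sup>2*z"
    using z by (intro add_left_mono mult_left_mono) auto
  finally have "c\<^sup>2 * z \<le> 0" by linarith
  then show ?thesis using z by (simp add: mult_le_0_iff)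
qed

text \<open>A minimiser of the Rayleigh quotient on the unit sphere is an eigenvector:
  otherwise moving along the residual \<open>r = Av - \<langle>Av,v\<rangle>v\<close> would decrease it to first order.\<close>

lemma symmetric_matrix_min_rayleigh_eigenvector:
  fixes A :: "real^'n^'n"
  assumes symA: "transpose A = A"
  obtains v l where "v \<noteq> 0" "A *v v = l *\<^sub>R v" "\<And>w. l * (norm w)\<^sup>2 \<le> (A *v w) \<bullet> w"
proof -
  define R where "R = (\<lambda>x::real^'n. (A *v x) \<bullet> x)"
  have "axis undefined 1 \<in> sphere (0::real^'n) 1"
    by simp
  moreover have "continuous_on (sphere 0 1) R"
    unfolding R_def by (intro continuous_intros)
  ultimately obtain v where v: "norm v = 1" and vmin: "\<And>y. norm y = 1 \<Longrightarrow> R v \<le> R y"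
    using continuous_attains_inf[of "sphere 0 1" R] by force
  define l where "l = R v"
  have rayleigh: "l * (norm w)\<^sup>2 \<le> R w" for w
  proof (cases "w = 0")
    case True
    then show ?thesis by (simp add: R_def)
  next
    case False
    then have "l \<le> R ((1 / norm w) *\<^sub>R w)"
      unfolding l_def by (intro vmin) simp
    also have "R ((1 / norm w) *\<^sub>R w) = R w / (norm w)\<^sup>2"
      by (simp add: R_def matrix_vector_mult_scaleR power2_eq_square)
    finally show ?thesis using False by (simp add: field_simps)
  qed
  define r where "r = A *v v - l *\<^sub>R v"
  have "r \<bullet> r = 0"
  proof (rule linear_coeff_zero_if_quadratic_nonneg[where e = "R r - l * (r \<bullet> r)"])
    fix t
    have vv: "v \<bullet> v = 1"
      using v by (metis power2_norm_eq_inner power_one)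
    have expand_R: "R (v + t *\<^sub>R r) = R v + 2*t*((A *v v) \<bullet> r) + t\<^sup>2 * R r"
      using symmetric_matrix_inner_commute[OF symA, of r v]
      by (simp add: R_def matrix_vector_right_distrib matrix_vector_mult_scaleR
          inner_add_left inner_add_right power2_eq_square algebra_simps inner_commute)
    have expand_norm: "(norm (v + t *\<^sub>R r))\<^sup>2 = 1 + 2*t*(v \<bullet> r) + t\<^sup>2 * (r \<bullet> r)"
      unfolding power2_norm_eq_inner using vv
      by (simp add: inner_add_left inner_add_right power2_eq_square algebra_simps inner_commute)
    have rr: "r \<bullet> r = (A *v v) \<bullet> r - l * (v \<bullet> r)"
      by (simp add: r_def inner_diff_left)
    show "0 \<le> 2*t*(r \<bullet> r) + t\<^sup>2*(R r - l * (r \<bullet> r))"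
      using rayleigh[of "v + t *\<^sub>R r"] unfolding expand_R expand_norm rr l_def
      by (simp add: algebra_simps)
  qed
  then have "A *v v = l *\<^sub>R v"
    unfolding r_def by simp
  moreover have "v \<noteq> 0"
    using v by auto
  ultimately show ?thesis
    using that rayleigh unfolding R_def by blast
qed

lemma symmetric_matrix_min_eigenvalue:
  fixes A :: "real^'n^'n"
  assumes "transpose A = A"
  shows "\<exists>v. v \<noteq> 0 \<and> A *v v = min_eigenvalue A *\<^sub>R v"
    and "min_eigenvalue A * (norm w)\<^sup>2 \<le> (A *v w) \<bullet> w"
proof -
  obtain v l where v: "v \<noteq> 0" "A *v v = l *\<^sub>R v" and l: "\<And>w. l * (norm w)\<^sup>2 \<le> (A *v w) \<bullet> w"
    using symmetric_matrix_min_rayleigh_eigenvector[OF assms] by blast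
  have "min_eigenvalue A = l"
    unfolding min_eigenvalue_def
  proof (rule cInf_eq_minimum)
    fix \<mu> assume "\<mu> \<in> {l. \<exists>v. v \<noteq> 0 \<and> A *v v = l *\<^sub>R v}"
    then obtain u where u: "u \<noteq> 0" "A *v u = \<mu> *\<^sub>R u" by blast
    have "l * (norm u)\<^sup>2 \<le> \<mu> * (norm u)\<^sup>2"
      using l[of u] u(2) by (simp add: power2_norm_eq_inner)
    then show "l \<le> \<mu>"
      using u(1) by simp
  qed (use v in blast)
  then show "\<exists>v. v \<noteq> 0 \<and> A *v v = min_eigenvalue A *\<^sub>R v" "min_eigenvalue A * (norm w)\<^sup>2 \<le> (A *v w) \<bullet> w"
    using v l by auto
qed

lemma pos_def_mat_min_eigenvalue_pos:
  fixes A :: "real^'n^'n"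
  assumes "pos_def_mat A"
  shows "0 < min_eigenvalue A"
proof -
  have "transpose A = A"
    using assms by (simp add: pos_def_mat_def)
  then obtain v where v: "v \<noteq> 0" "A *v v = min_eigenvalue A *\<^sub>R v"
    using symmetric_matrix_min_eigenvalue(1) by blast
  have "0 < (A *v v) \<bullet> v"
    using assms v(1) by (simp add: pos_def_mat_def)
  also have "\<dots> = min_eigenvalue A * (v \<bullet> v)"
    using v(2) by simp
  finally have "0 < min_eigenvalue A * (v \<bullet> v)" .
  moreover have "0 < v \<bullet> v"
    using v(1) by simp
  ultimately show ?thesis
    by (simp add: zero_less_mult_iff)
qed

definition quadratic_fun :: "real^'n^'n \<Rightarrow> real^'n \<Rightarrow> real \<Rightarrow> real^'n \<Rightarrow> real" where
  "quadratic_fun C c \<gamma> x = (1/2) * ((C *v x) \<bullet> x) + c \<bullet> x + \<gamma>"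

lemma quadratic_fun_has_derivative:
  "(quadratic_fun C c \<gamma> has_derivative (\<lambda>h. (1/2) * ((C *v x) \<bullet> h + (C *v h) \<bullet> x) + c \<bullet> h)) (at x)"
proof -
  have mv: "\<And>F. ((*v) C has_derivative (*v) C) F"
    by (rule bounded_linear_imp_has_derivative) (rule matrix_vector_mul_bounded_linear)
  show ?thesis
    unfolding quadratic_fun_def[abs_def]
    by (auto intro!: derivative_eq_intros mv simp: algebra_simps)
qed

lemma quadratic_fun_taylor:
  "quadratic_fun C c \<gamma> (x + d) =
     quadratic_fun C c \<gamma> x + frechet_derivative (quadratic_fun C c \<gamma>) (at x) d
       + (1/2) * ((C *v d) \<bullet> d)"
  unfolding frechet_derivative_at[OF quadratic_fun_has_derivative, symmetric]
  by (simp add: quadratic_fun_def matrix_vector_right_distrib inner_add_left inner_add_right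
      algebra_simps)

lemma quadratic_fraction_derivative_identity:
  fixes A B :: "real^'n^'n"
  assumes g: "g = quadratic_fun A a \<alpha>" and q: "q = quadratic_fun B b \<beta>"
    and f: "f = (\<lambda>x. g x / q x)" and qx: "0 < q x" and qy: "0 < q y"
  shows "f differentiable (at x)"
    and "q x * frechet_derivative f (at x) (y - x)
           = q y * (f y - f x) - (1/2) * ((A *v (y - x)) \<bullet> (y - x))
             + (1/2) * f x * ((B *v (y - x)) \<bullet> (y - x))"
proof -
  define Dg Dq where "Dg = frechet_derivative g (at x)" and "Dq = frechet_derivative q (at x)"
  have "(g has_derivative Dg) (at x)" "(q has_derivative Dq) (at x)"
    unfolding Dg_def Dq_def g q frechet_derivative_works[symmetric]
    by (auto intro: differentiableI[OF quadratic_fun_has_derivative])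
  then have fd: "(f has_derivative (\<lambda>h. (Dg h * q x - g x * Dq h) / (q x * q x))) (at x)"
    unfolding f using qx by (intro has_derivative_divide') auto
  then show "f differentiable (at x)"
    by (rule differentiableI)
  define d where "d = y - x"
  have gx: "g x = f x * q x" and gy: "g y = f y * q y"
    using qx qy by (simp_all add: f)
  have "q x * frechet_derivative f (at x) d = Dg d - f x * Dq d"
    unfolding frechet_derivative_at[OF fd, symmetric] gx using qx
    by (simp add: field_simps)
  moreover have "Dg d = g y - g x - (1/2) * ((A *v d) \<bullet> d)"
    using quadratic_fun_taylor[of A a \<alpha> x d] unfolding d_def Dg_def g by simp
  moreover have "Dq d = q y - q x - (1/2) * ((B *v d) \<bullet> d)"
    using quadratic_fun_taylor[of B b \<beta> x d] unfolding d_def Dq_def q by simp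
  ultimately show "q x * frechet_derivative f (at x) (y - x)
           = q y * (f y - f x) - (1/2) * ((A *v (y - x)) \<bullet> (y - x))
             + (1/2) * f x * ((B *v (y - x)) \<bullet> (y - x))"
    unfolding gx gy d_def by (simp add: algebra_simps)
qed

lemma strong_quasar_inequality_from_derivative_bound:
  fixes Q Qs F Fs D s k \<mu> d2 m M :: real
  assumes QD: "Q * D \<le> Qs * (Fs - F) - s/2" and FF: "Fs \<le> F"
    and Q: "m \<le> Q" "Q \<le> M" and Qs: "m \<le> Qs" and m: "0 < m"
    and k: "0 < k" "k * M \<le> m" and \<mu>: "0 \<le> \<mu>" and d2: "0 \<le> d2" and s: "k * M * \<mu> * d2 \<le> s"
  shows "F + (1/k) * D + \<mu>/2 * d2 \<le> Fs"
proof -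
  have Qp: "0 < Q"
    using Q m by linarith
  have "k * Q \<le> k * M"
    using k Q(2) by simp
  then have "0 \<le> (Qs - k * Q) * (F - Fs)"
    using k(2) Qs FF by (intro mult_nonneg_nonneg) auto
  moreover have "k * Q * \<mu> * d2 \<le> k * M * \<mu> * d2"
    using k Q(2) \<mu> d2 by (intro mult_right_mono mult_left_mono) auto
  ultimately have "k * Q * (F + (1/k) * D + \<mu>/2 * d2) \<le> k * Q * Fs"
    using QD s k by (simp add: algebra_simps)
  then show ?thesis
    using k Qp by (simp add: mult_le_cancel_left_pos)
qed

lemma quadratic_fraction_strongly_quasar_convex:
  fixes A B :: "real^'n^'n"
  assumes g: "g = quadratic_fun A a \<alpha>" and q: "q = quadratic_fun B b \<beta>"
    and f: "f = (\<lambda>x. g x / q x)" and K: "K = {x. m \<le> q x \<and> q x \<le> M}"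
    and mM: "0 < m" "m \<le> M" and A: "pos_def_mat A"
    and sign: "\<And>x d. x \<in> K \<Longrightarrow> g x * ((B *v d) \<bullet> d) \<le> 0"
    and xs: "xs \<in> K" "\<And>x. x \<in> K \<Longrightarrow> f xs \<le> f x"
    and k: "0 < k" "k * M \<le> m" and \<mu>: "0 \<le> \<mu>" "k * M * \<mu> \<le> min_eigenvalue A"
  shows "strongly_quasar_convex f K xs k \<mu>"
  unfolding strongly_quasar_convex_def
proof (intro conjI ballI k(1) \<mu>(1))
  have "k * M \<le> 1 * M" "0 < M"
    using k(2) mM by linarith+
  then show "k \<le> 1"
    by (simp add: mult_le_cancel_right)
  fix x assume x: "x \<in> K"
  have qx: "m \<le> q x" "q x \<le> M" "0 < q x" and qxs: "m \<le> q xs" "0 < q xs"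
    using x xs(1) mM unfolding K by auto
  note identity = quadratic_fraction_derivative_identity[OF g q f qx(3) qxs(2)]
  show "f differentiable (at x)"
    by (rule identity(1))
  define d where "d = xs - x"
  have "f x * ((B *v d) \<bullet> d) \<le> 0"
    using sign[OF x, of d] qx(3) by (simp add: f mult.commute mult_le_0_iff divide_le_0_iff)
  then have QD: "q x * frechet_derivative f (at x) d \<le> q xs * (f xs - f x) - ((A *v d) \<bullet> d)/2"
    using identity(2) unfolding d_def by simp
  have "k * M * \<mu> * (norm d)\<^sup>2 \<le> min_eigenvalue A * (norm d)\<^sup>2"
    using \<mu>(2) by (simp add: mult_right_mono)
  also have "\<dots> \<le> (A *v d) \<bullet> d"
    using A unfolding pos_def_mat_def by (simp add: symmetric_matrix_min_eigenvalue(2))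
  finally have "f x + (1/k) * frechet_derivative f (at x) d + \<mu>/2 * (norm d)\<^sup>2 \<le> f xs"
    using strong_quasar_inequality_from_derivative_bound[OF QD xs(2)[OF x] qx(1,2) qxs(1) mM(1)
        k \<mu>(1)] by simp
  then show "f x + 1/k * frechet_derivative f (at x) (xs - x) + \<mu>/2 * (norm (xs - x))\<^sup>2 \<le> f xs"
    by (simp add: d_def)
qed

lemma interpolated_parameters_product_le:
  fixes lam m M \<sigma> :: real
  assumes lam: "0 < lam" "lam < 1" and mM: "0 < m" "m \<le> M" and \<sigma>: "0 \<le> \<sigma>"
  shows "lam * (m / M) * M * ((1 / lam - 1) * \<sigma> / (4 * M)) \<le> \<sigma>"
proof -
  have "(1 - lam) * m \<le> m"
    using lam mM by (intro mult_left_le_one_le) auto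
  then have "(1 - lam) * m \<le> 4 * M"
    using mM by linarith
  then have bound: "\<sigma> * ((1 - lam) * m) \<le> \<sigma> * (4 * M)"
    using \<sigma> by (rule mult_left_mono)
  have "lam * (m / M) * M * ((1 / lam - 1) * \<sigma> / (4 * M)) = \<sigma> * ((1 - lam) * m) / (4 * M)"
    using lam mM by (simp add: field_simps less_imp_neq[symmetric])
  also have "\<dots> \<le> \<sigma>"
    using bound mM by (simp add: divide_le_eq mult.commute)
  finally show ?thesis .
qed

lemma quadratic_fraction_sign_condition:
  fixes B :: "real^'n^'n"
  assumes "B = 0 \<or> ((\<forall>x\<in>K. g x \<ge> 0) \<and> neg_semidef_mat B) \<or> ((\<forall>x\<in>K. g x \<le> 0) \<and> pos_semidef_mat B)"
    and "x \<in> K"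
  shows "g x * ((B *v d) \<bullet> d) \<le> 0"
  using assms unfolding neg_semidef_mat_def pos_semidef_mat_def
  by (auto simp: mult_nonneg_nonpos mult_nonpos_nonneg)

theorem proposition5p5:
  fixes A B :: "real^'p^'p" and a b xs :: "real^'p" and \<alpha> \<beta> m M :: real
    and g q f :: "real^'p \<Rightarrow> real" and K :: "(real^'p) set"
  assumes g_def: "\<And>x. g x = (1/2) * ((A *v x) \<bullet> x) + a \<bullet> x + \<alpha>"
    and q_def: "\<And>x. q x = (1/2) * ((B *v x) \<bullet> x) + b \<bullet> x + \<beta>"
    and f_def: "\<And>x. f x = g x / q x"
    and mM: "0 < m" "m < M"
    and K_def: "K = {x. m \<le> q x \<and> q x \<le> M}"
    and A_pd: "pos_def_mat A"
    and cases: "B = 0 \<or> ((\<forall>x\<in>K. g x \<ge> 0) \<and> neg_semidef_mat B)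
                      \<or> ((\<forall>x\<in>K. g x \<le> 0) \<and> pos_semidef_mat B)"
    and xs_min: "xs \<in> K" "\<forall>x\<in>K. f xs \<le> f x"
  shows "quasar_convex f K xs (m / M)
       \<and> strongly_quasar_convex f K xs ((m / M) / 2) (min_eigenvalue A / m)
       \<and> (\<forall>lam. 0 < lam \<and> lam < 1 \<longrightarrow>
            strongly_quasar_convex f K xs (lam * (m / M))
              ((1 / lam - 1) * min_eigenvalue A / (4 * M)))"
proof -
  have \<sigma>: "0 < min_eigenvalue A"
    using A_pd by (rule pos_def_mat_min_eigenvalue_pos)
  have quadratic: "g = quadratic_fun A a \<alpha>" "q = quadratic_fun B b \<beta>" "f = (\<lambda>x. g x / q x)"
    using g_def q_def f_def by (auto simp: fun_eq_iff quadratic_fun_def)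
  note sqc = quadratic_fraction_strongly_quasar_convex[OF quadratic K_def mM(1) less_imp_le[OF mM(2)]
      A_pd quadratic_fraction_sign_condition[OF cases] xs_min(1) bspec[OF xs_min(2)]]
  have "quasar_convex f K xs (m / M)"
    unfolding quasar_convex_def by (rule sqc) (use mM \<sigma> in auto)
  moreover have "strongly_quasar_convex f K xs (m / M / 2) (min_eigenvalue A / m)"
    by (rule sqc) (use mM \<sigma> in auto)
  moreover have "strongly_quasar_convex f K xs (lam * (m / M)) ((1 / lam - 1) * min_eigenvalue A / (4 * M))"
    if "0 < lam" "lam < 1" for lam
    using that mM \<sigma> interpolated_parameters_product_le[OF that mM(1) less_imp_le[OF mM(2)]]
    by (intro sqc) auto
  ultimately show ?thesis
    by blast
qed

end
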